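(* For every $\beta\in[\frac12,1)$ and every integer $k\ge2$, $$Q^{-1}(k,\beta)\le\frac{k}{k+1}\,Q^{-1}(k+1,\beta).$$
   Context: For an integer $k\ge1$ and $\lambda\ge0$, $Q(k,\lambda)=\Gamma(k,\lambda)/\Gamma(k)=\mathbb{P}(\operatorname{Poi}(\lambda)\le k-1)$ (regularized upper incomplete gamma function); $Q(k,\cdot)$ decreases strictly from $1$ to $0$, and for $\beta\in(0,1)$, $Q^{-1}(k,\beta)$ is the unique $\lambda>0$ with $Q(k,\lambda)=\beta$. *)

theory Defs
  imports "HOL-Analysis.Analysis"
begin

text \<open>Regularized upper incomplete gamma function for integer k \<ge> 1:
  Q(k, lambda) = P(Poi(lambda) \<le> k - 1).\<close>
definition Q :: "nat \<Rightarrow> real \<Rightarrow> real" where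
  "Q k l = (\<Sum>j<k. exp (- l) * l ^ j / fact j)"

definition Q_inv :: "nat \<Rightarrow> real \<Rightarrow> real" where
  "Q_inv k b = (THE l. l > 0 \<and> Q k l = b)"

end

theory Submission
  imports Defs
begin

(* Write lambda = Q_inv k beta and mu = Q_inv (k + 1) beta. The median of Poi(k) is at least k,
   i.e. Q(k, k) <= 1/2 <= beta, hence lambda <= k. Since Q(k + 1, -) is decreasing, it suffices
   to show Q(k, lambda) <= Q(k + 1, y) for y = (k + 1) lambda / k. Now Q(k, lambda) - Q(k, y) is
   the integral over [lambda, y] of the Poisson weight e^-x x^(k-1) / (k-1)!, which for y <= k + 1
   is at most its value at y times e^(2 (y - x) / y). Integrating, and using the Pade bound
   e^(2/(k+1)) - 1 <= 2/k, bounds the difference by e^-y y^k / k! = Q(k + 1, y) - Q(k, y). *)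

definition poi_pmf :: "nat \<Rightarrow> real \<Rightarrow> real" where
  "poi_pmf j l = exp (- l) * l ^ j / fact j"

lemma Q_eq_sum_poi_pmf: "Q k l = (\<Sum>j<k. poi_pmf j l)"
  by (simp add: Q_def poi_pmf_def)

lemma Q_Suc: "Q (Suc k) l = Q k l + poi_pmf k l"
  by (simp add: Q_eq_sum_poi_pmf)

lemma Q_0: "0 < k \<Longrightarrow> Q k 0 = 1"
  by (cases k) (simp_all add: Q_eq_sum_poi_pmf poi_pmf_def sum.lessThan_Suc_shift del: sum.lessThan_Suc)

lemma poi_pmf_pos: "0 < l \<Longrightarrow> 0 < poi_pmf j l"
  by (simp add: poi_pmf_def)

lemma poi_pmf_Suc: "poi_pmf (Suc j) l = l / real (Suc j) * poi_pmf j l"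
  by (simp add: poi_pmf_def field_simps del: of_nat_Suc)

lemma has_real_derivative_poi_pmf_Suc:
  "(poi_pmf (Suc j) has_real_derivative poi_pmf j l - poi_pmf (Suc j) l) (at l)"
proof -
  have "((\<lambda>l. exp (- l) * l ^ Suc j) has_real_derivative
      exp (- l) * (real (Suc j) * l ^ j) - exp (- l) * l ^ Suc j) (at l)"
    by (rule derivative_eq_intros refl)+ (simp add: algebra_simps del: of_nat_Suc)
  from DERIV_cdivide [OF this, of "fact (Suc j)"] show ?thesis
    unfolding poi_pmf_def [abs_def] by (simp add: diff_divide_distrib del: of_nat_Suc)
qed

lemma has_real_derivative_Q_Suc: "(Q (Suc k) has_real_derivative - poi_pmf k l) (at l)"
proof (induction k)
  case 0
  show ?case
    by (simp add: Q_eq_sum_poi_pmf poi_pmf_def [abs_def]) (auto intro!: derivative_eq_intros)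
next
  case (Suc k)
  have "((\<lambda>l. Q (Suc k) l + poi_pmf (Suc k) l) has_real_derivative
      - poi_pmf k l + (poi_pmf k l - poi_pmf (Suc k) l)) (at l)"
    by (intro DERIV_add Suc.IH has_real_derivative_poi_pmf_Suc)
  then show ?case
    by (simp add: Q_Suc [abs_def])
qed

lemma continuous_on_Q: "continuous_on S (Q k)"
  unfolding Q_def by (intro continuous_intros) auto

lemma Q_strict_antimono:
  assumes "0 < k" "0 \<le> x" "x < y"
  shows "Q k y < Q k x"
proof -
  obtain m where k: "k = Suc m"
    using assms(1) gr0_implies_Suc by blast
  obtain z where z: "x < z" "Q k y - Q k x = (y - x) * - poi_pmf m z"
    using MVT2 [OF assms(3), of "Q k" "\<lambda>l. - poi_pmf m l"] has_real_derivative_Q_Suc k by blast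
  have "0 < poi_pmf m z"
    using z assms by (intro poi_pmf_pos) linarith
  then have "0 < (y - x) * poi_pmf m z"
    using assms by simp
  then show ?thesis
    using z by simp
qed

lemma Q_le_Q_iff:
  assumes "0 < k" "0 \<le> x" "0 \<le> y"
  shows "Q k x \<le> Q k y \<longleftrightarrow> y \<le> x"
  using Q_strict_antimono [OF assms(1)] assms(2,3) by (metis linorder_not_less order.order_iff_strict)

lemma sum_power_div_fact_le_exp:
  fixes x :: real
  assumes "0 \<le> x"
  shows "(\<Sum>n<N. x ^ n / fact n) \<le> exp x"
  using assms summable_exp_generic [of x]
  by (auto simp: exp_def divide_inverse ac_simps intro!: sum_le_suminf)

lemma poi_pmf_le:
  assumes "0 < l"
  shows "poi_pmf j l \<le> real (Suc j) / l"
proof -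
  have "l ^ Suc j / fact (Suc j) \<le> (\<Sum>n<Suc (Suc j). l ^ n / fact n)"
    by (rule member_le_sum) (use assms in auto)
  also have "\<dots> \<le> exp l"
    using assms by (intro sum_power_div_fact_le_exp) simp
  finally have "l / real (Suc j) * (l ^ j / fact j) \<le> exp l"
    by (simp add: fact_Suc field_simps del: of_nat_Suc)
  then show ?thesis
    using assms by (simp add: poi_pmf_def exp_minus field_simps del: of_nat_Suc)
qed

lemma Q_le_square_div:
  assumes "0 < l"
  shows "Q k l \<le> real k ^ 2 / l"
proof -
  have "Q k l \<le> (\<Sum>j<k. real k / l)"
    unfolding Q_eq_sum_poi_pmf
  proof (rule sum_mono)
    fix j assume "j \<in> {..<k}"
    then have "real (Suc j) / l \<le> real k / l"
      using assms by (intro divide_right_mono) auto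
    then show "poi_pmf j l \<le> real k / l"
      using poi_pmf_le [OF assms] order.trans by blast
  qed
  then show ?thesis
    by (simp add: power2_eq_square)
qed

lemma ex_Q_eq:
  assumes "0 < k" "0 < b" "b < 1"
  obtains x where "0 < x" "Q k x = b"
proof -
  define M where "M = real k ^ 2 / b + 1"
  have "0 < M"
    unfolding M_def using assms by (simp add: add_nonneg_pos)
  have "Q k M \<le> real k ^ 2 / M"
    using Q_le_square_div [OF \<open>0 < M\<close>] .
  also have "\<dots> \<le> b"
  proof -
    have "real k ^ 2 \<le> b * M"
      unfolding M_def using assms by (simp add: distrib_left)
    then show ?thesis
      using \<open>0 < M\<close> by (simp add: divide_le_eq mult.commute)
  qed
  finally have "Q k M \<le> b" .
  moreover have "b \<le> Q k 0"
    using Q_0 assms by simp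
  ultimately obtain x where "0 \<le> x" "Q k x = b"
    using IVT2' [of "Q k" M b 0, OF _ _ _ continuous_on_Q] \<open>0 < M\<close> by auto
  moreover have "x \<noteq> 0"
    using Q_0 assms \<open>Q k x = b\<close> by auto
  ultimately show ?thesis
    using that [of x] by simp
qed

lemma Q_inv:
  assumes "0 < k" "0 < b" "b < 1"
  shows "0 < Q_inv k b" "Q k (Q_inv k b) = b"
proof -
  obtain x where x: "0 < x" "Q k x = b"
    using ex_Q_eq assms .
  have "Q_inv k b = x"
    unfolding Q_inv_def
  proof (rule the_equality)
    show "0 < x \<and> Q k x = b"
      using x by simp
    show "y = x" if "0 < y \<and> Q k y = b" for y
      using that x Q_le_Q_iff [OF assms(1), of x y] Q_le_Q_iff [OF assms(1), of y x] by auto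
  qed
  then show "0 < Q_inv k b" "Q k (Q_inv k b) = b"
    using x by simp_all
qed

(* The 2i+1 consecutive factors j+1, ..., j+2i+1 pair off around the middle one i+1+j. *)
lemma fact_le_power_mult_fact:
  "fact (2 * i + 1 + j) \<le> (i + 1 + j) ^ (2 * i + 1) * (fact j :: nat)"
proof (induction i arbitrary: j)
  case 0
  show ?case by simp
next
  case (Suc i)
  have square: "(2 * i + 3 + j) * (j + 1) \<le> (i + 2 + j) ^ 2"
  proof -
    have "(i + 2 + j) ^ 2 = (2 * i + 3 + j) * (j + 1) + (i + 1) ^ 2"
      by (simp add: power2_eq_square algebra_simps)
    then show ?thesis by simp
  qed
  have "fact (2 * Suc i + 1 + j) = (2 * i + 3 + j) * (fact (2 * i + 1 + (j + 1)) :: nat)"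
    by (simp add: algebra_simps)
  also have "\<dots> \<le> (2 * i + 3 + j) * ((i + 2 + j) ^ (2 * i + 1) * fact (j + 1))"
    using Suc.IH [of "j + 1"] by (intro mult_left_mono) (simp_all add: algebra_simps)
  also have "\<dots> = ((2 * i + 3 + j) * (j + 1)) * ((i + 2 + j) ^ (2 * i + 1) * fact j)"
    by (simp add: algebra_simps)
  also have "\<dots> \<le> (i + 2 + j) ^ 2 * ((i + 2 + j) ^ (2 * i + 1) * fact j)"
    using square by (rule mult_right_mono) simp
  also have "\<dots> = (Suc i + 1 + j) ^ (2 * Suc i + 1) * fact j"
    by (simp add: power_add [symmetric] algebra_simps)
  finally show ?case .
qed

(* Pairing k^(k-1-i)/(k-1-i)! <= k^(k+i)/(k+i)!, the first k terms of the exponential series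
   at k make up at most half of exp k. *)
lemma Q_self_le_half:
  assumes "0 < k"
  shows "Q k (real k) \<le> 1 / 2"
proof -
  define p where "p j = real k ^ j / fact j" for j
  have mirror: "p (k - 1 - i) \<le> p (k + i)" if "i < k" for i
  proof -
    have exponents: "2 * i + 1 + (k - 1 - i) = k + i" "i + 1 + (k - 1 - i) = k"
      using that by simp_all
    then have "fact (k + i) \<le> k ^ (2 * i + 1) * (fact (k - 1 - i) :: nat)"
      using fact_le_power_mult_fact [of i "k - 1 - i"] by (simp only:)
    then have "fact (k + i) \<le> real k ^ (2 * i + 1) * fact (k - 1 - i)"
      by (metis of_nat_fact of_nat_le_iff of_nat_mult of_nat_power)
    moreover have "real k ^ (k + i) = real k ^ (k - 1 - i) * real k ^ (2 * i + 1)"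
      using exponents(1) by (metis power_add add.commute)
    ultimately show ?thesis
      unfolding p_def using assms
      by (simp add: divide_simps mult_left_mono)
  qed
  have "(\<Sum>j<k. p j) = (\<Sum>i<k. p (k - 1 - i))"
    by (rule sum.reindex_bij_witness [where i = "\<lambda>i. k - 1 - i" and j = "\<lambda>i. k - 1 - i"]) auto
  also have "\<dots> \<le> (\<Sum>i<k. p (k + i))"
    using mirror by (intro sum_mono) simp
  also have "\<dots> = (\<Sum>j\<in>{k..<2 * k}. p j)"
    by (rule sum.reindex_bij_witness [where i = "\<lambda>j. j - k" and j = "\<lambda>i. k + i"]) auto
  finally have "2 * (\<Sum>j<k. p j) \<le> (\<Sum>j<k. p j) + (\<Sum>j\<in>{k..<2 * k}. p j)"
    by simp
  also have "\<dots> = (\<Sum>j<2 * k. p j)"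
    by (simp add: lessThan_atLeast0 sum.atLeastLessThan_concat)
  also have "\<dots> \<le> exp (real k)"
    unfolding p_def by (rule sum_power_div_fact_le_exp) simp
  finally have "(\<Sum>j<k. p j) \<le> exp (real k) / 2"
    by simp
  moreover have "Q k (real k) = (\<Sum>j<k. p j) / exp (real k)"
    by (simp add: Q_def p_def exp_minus sum_divide_distrib field_simps)
  ultimately show ?thesis
    by (simp add: divide_le_eq)
qed

lemma exp_le_pade:
  fixes x :: real
  assumes "0 \<le> x"
  shows "(2 - x) * exp x \<le> 2 + x"
proof -
  define f :: "real \<Rightarrow> real" where "f t = 2 + t - (2 - t) * exp t" for t
  have "f 0 \<le> f x"
  proof (rule DERIV_nonneg_imp_nondecreasing [OF assms])
    fix t :: real
    have "(f has_real_derivative 1 - (1 - t) * exp t) (at t)"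
      unfolding f_def [abs_def] by (auto intro!: derivative_eq_intros simp: algebra_simps)
    moreover have "(1 - t) * exp t \<le> 1"
      using mult_right_mono [OF exp_ge_add_one_self [of "- t"] exp_ge_zero [of t]]
      by (simp add: exp_minus)
    ultimately show "\<exists>d. (f has_real_derivative d) (at t) \<and> 0 \<le> d"
      by auto
  qed
  then show ?thesis
    by (simp add: f_def)
qed

lemma exp_two_div_Suc_le:
  assumes "0 < k"
  shows "exp (2 / real (Suc k)) - 1 \<le> 2 / real k"
proof -
  define t where "t = 2 / (real k + 1)"
  have "(2 - t) * exp t \<le> 2 + t"
    by (rule exp_le_pade) (simp add: t_def)
  moreover have "2 - t = 2 * real k / (real k + 1)" "2 + t = 2 * (real k + 2) / (real k + 1)"
    by (simp_all add: t_def field_simps)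
  ultimately have "real k * exp t \<le> real k + 2"
    by (simp add: divide_le_cancel)
  then show ?thesis
    using assms by (simp add: t_def field_simps)
qed

lemma poi_pmf_le_scaled:
  assumes "0 < x" "x \<le> y" "y \<le> real j + 2"
  shows "poi_pmf j x \<le> poi_pmf j y * exp (2 * (y - x) / y)"
proof -
  define w where "w = y - x"
  have "0 < y" "0 \<le> w"
    using assms by (simp_all add: w_def)
  have "y * (1 - w / y) \<le> y * exp (- w / y)"
    using \<open>0 < y\<close> exp_ge_add_one_self [of "- w / y"] by (intro mult_left_mono) auto
  then have "x \<le> y * exp (- w / y)"
    using \<open>0 < y\<close> by (simp add: w_def field_simps)
  then have "x ^ j \<le> y ^ j * exp (- real j * w / y)"
    using assms(1) power_mono [of x "y * exp (- w / y)" j]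
    by (simp add: power_mult_distrib flip: exp_of_nat_mult)
  then have "poi_pmf j x \<le> exp (- x) * (y ^ j * exp (- real j * w / y)) / fact j"
    unfolding poi_pmf_def by (intro divide_right_mono mult_left_mono) auto
  also have "\<dots> = poi_pmf j y * exp (w - real j * w / y)"
  proof -
    have "exp (- x) = exp (- y) * exp w" "exp (w - real j * w / y) = exp w * exp (- real j * w / y)"
      by (simp_all add: w_def flip: exp_add)
    then show ?thesis
      by (simp add: poi_pmf_def)
  qed
  also have "w - real j * w / y \<le> 2 * w / y"
  proof -
    have "w - real j * w / y = w * (y - real j) / y"
      using \<open>0 < y\<close> by (simp add: field_simps)
    also have "\<dots> \<le> w * 2 / y"
      using assms \<open>0 \<le> w\<close> \<open>0 < y\<close> by (intro divide_right_mono mult_left_mono) auto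
    finally show ?thesis
      by (simp add: mult.commute)
  qed
  then have "poi_pmf j y * exp (w - real j * w / y) \<le> poi_pmf j y * exp (2 * w / y)"
    using assms by (intro mult_left_mono) (simp_all add: poi_pmf_pos less_imp_le)
  finally show ?thesis
    by (simp add: w_def)
qed

(* The right-hand side is the integral over [x, y] of the bound in poi_pmf_le_scaled. *)
lemma Q_Suc_diff_le:
  assumes "0 < x" "x \<le> y" "y \<le> real k + 2"
  shows "Q (Suc k) x - Q (Suc k) y \<le> poi_pmf k y * (y / 2) * (exp (2 * (y - x) / y) - 1)"
proof -
  define c where "c = poi_pmf k y * (y / 2)"
  define F where "F t = Q (Suc k) t - c * exp (2 * (y - t) / y)" for t
  have "0 < y"
    using assms by simp
  have "F x \<le> F y"
  proof (rule DERIV_nonneg_imp_nondecreasing [OF assms(2)])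
    fix t assume t: "x \<le> t" "t \<le> y"
    have "(F has_real_derivative - poi_pmf k t + poi_pmf k y * exp (2 * (y - t) / y)) (at t)"
      unfolding F_def [abs_def] c_def using \<open>0 < y\<close>
      by (auto intro!: derivative_eq_intros has_real_derivative_Q_Suc)
    moreover have "poi_pmf k t \<le> poi_pmf k y * exp (2 * (y - t) / y)"
      using t assms by (intro poi_pmf_le_scaled) auto
    ultimately show "\<exists>d. (F has_real_derivative d) (at t) \<and> 0 \<le> d"
      by auto
  qed
  then show ?thesis
    by (simp add: F_def c_def algebra_simps)
qed

lemma Q_le_Q_Suc_scaled:
  assumes "0 < k" "0 < l" "l \<le> real k"
  shows "Q k l \<le> Q (Suc k) (real (Suc k) / real k * l)"
proof -
  obtain m where k: "k = Suc m"
    using assms(1) gr0_implies_Suc by blast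
  define y where "y = real (Suc k) / real k * l"
  have "y - l = l / real k"
    using assms by (simp add: y_def field_simps)
  moreover have "0 < y"
    using assms by (simp add: y_def)
  ultimately have "l \<le> y" "2 * (y - l) / y = 2 / real (Suc k)"
    using assms by (simp_all add: y_def divide_simps)
  have "y \<le> real (Suc k) / real k * real k"
    unfolding y_def using assms by (intro mult_left_mono) simp_all
  then have "y \<le> real m + 2"
    using assms by (simp add: k)
  then have "Q k l - Q k y \<le> poi_pmf m y * (y / 2) * (exp (2 / real (Suc k)) - 1)"
    using Q_Suc_diff_le [of l y m] \<open>l \<le> y\<close> \<open>2 * (y - l) / y = 2 / real (Suc k)\<close> assms(2) k
    by simp
  also have "\<dots> \<le> poi_pmf m y * (y / 2) * (2 / real k)"
    using exp_two_div_Suc_le [OF assms(1)] poi_pmf_pos [OF \<open>0 < y\<close>, of m] \<open>0 < y\<close>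
    by (intro mult_left_mono) auto
  also have "\<dots> = poi_pmf k y"
    by (simp add: k poi_pmf_Suc del: of_nat_Suc)
  finally show ?thesis
    by (simp add: Q_Suc y_def)
qed

theorem lemma10:
  fixes b :: real and k :: nat
  assumes "1/2 \<le> b" and "b < 1" and "k \<ge> 2"
  shows "Q_inv k b \<le> real k / real (k + 1) * Q_inv (k + 1) b"
proof -
  define l where "l = Q_inv k b"
  define u where "u = Q_inv (Suc k) b"
  have "0 < k" "0 < b"
    using assms by simp_all
  then have l: "0 < l" "Q k l = b" and u: "0 < u" "Q (Suc k) u = b"
    using Q_inv [of k b] Q_inv [of "Suc k" b] assms(2) by (simp_all add: l_def u_def)
  have "Q k (real k) \<le> Q k l"
    using Q_self_le_half [OF \<open>0 < k\<close>] assms(1) l by simp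
  then have "l \<le> real k"
    using Q_le_Q_iff [OF \<open>0 < k\<close>, of "real k" l] l by simp
  then have "Q (Suc k) u \<le> Q (Suc k) (real (Suc k) / real k * l)"
    using Q_le_Q_Suc_scaled [OF \<open>0 < k\<close> \<open>0 < l\<close>] l u by simp
  then have "real (Suc k) / real k * l \<le> u"
    using Q_le_Q_iff [of "Suc k" u "real (Suc k) / real k * l"] l u by simp
  then show ?thesis
    using \<open>0 < k\<close> by (simp add: l_def u_def field_simps)
qed

end
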